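(* Let $k$ be a complete non-Archimedean valued field with valuation $\nu:k\to\mathbb T$, and let $G=\operatorname{Spec}A$ be an affine group scheme of finite type over $k$, so $A$ is a finitely generated Hopf algebra over $k$ with coproduct $\Delta$. For all $g,h\in\operatorname{Hom}_k(A,\mathbb T)$ we have $g\star h\subseteq g*h$, where $\star$ and $*$ are the hyperoperations defined below.
   Context: The tropical hyperfield $\mathbb T=\mathbb R\cup\{-\infty\}$ has multiplication given by usual addition ($-\infty$ absorbing) and hyperaddition $a\oplus b=\max\{a,b\}$ if $a\neq b$, $a\oplus a=\{t\in\mathbb T:t\le a\}$; for subsets, $S\oplus S'=\bigcup s\oplus s'$, and iterated sums are defined accordingly. A hyperring homomorphism $\varphi:A\to\mathbb T$ satisfies $\varphi(0)=-\infty$, $\varphi(1)=0$, $\varphi(xy)=\varphi(x)+\varphi(y)$, $\varphi(x+y)\in\varphi(x)\oplus\varphi(y)$. For a $k$-algebra $B$, $\operatorname{Hom}_k(B,\mathbb T)$ is the set of such homomorphisms restricting to $\nu$ on $k$. Let $j_1,j_2:A\to A\otimes_kA$ be $j_1(a)=a\otimes1$, $j_2(a)=1\otimes a$. Berkovich's hyperoperation in Hopf-algebraic form: $g\star h=\{f\in\operatorname{Hom}_k(A,\mathbb T):\exists\beta\in\operatorname{Hom}_k(A\otimes_kA,\mathbb T)\text{ with }\beta\circ j_1=g,\ \beta\circ j_2=h,\ f=\beta\circ\Delta\}$. Connes–Consani hyperoperation: $g*h=\{f\in\operatorname{Hom}_k(A,\mathbb T): f(a)\in\bigoplus g(a_{(1)})\odot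 h(a_{(2)})\text{ for all }a\in A\text{ and every expression }\Delta(a)=\sum a_{(1)}\otimes a_{(2)}\}$, where $\odot$ is the multiplication of $\mathbb T$. *)

theory Defs
  imports Complex_Main "HOL-Library.Extended_Real"
begin

definition trop :: "ereal set" where
  "trop = {x. x \<noteq> \<infinity>}"

definition hadd :: "ereal \<Rightarrow> ereal \<Rightarrow> ereal set" where
  "hadd a b = (if a \<noteq> b then {max a b} else {t. t \<noteq> \<infinity> \<and> t \<le> a})"

primrec hsum :: "ereal list \<Rightarrow> ereal set" where
  "hsum [] = {-\<infinity>}"
| "hsum (x # xs) = (\<Union>s\<in>hsum xs. hadd x s)"

text \<open>Hyperring homomorphism R -> T (multiplication of T is ereal addition).\<close>
definition hyperring_hom :: "('r::comm_ring_1 \<Rightarrow> ereal) \<Rightarrow> bool" where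
  "hyperring_hom \<phi> \<longleftrightarrow>
     (\<forall>x. \<phi> x \<in> trop) \<and> \<phi> 0 = -\<infinity> \<and> \<phi> 1 = 0 \<and>
     (\<forall>x y. \<phi> (x * y) = \<phi> x + \<phi> y) \<and>
     (\<forall>x y. \<phi> (x + y) \<in> hadd (\<phi> x) (\<phi> y))"

text \<open>A non-Archimedean valuation in the tropical (max, log-absolute-value) convention.\<close>
definition nonarch_valuation :: "('k::field \<Rightarrow> ereal) \<Rightarrow> bool" where
  "nonarch_valuation \<nu> \<longleftrightarrow>
     (\<forall>x. \<nu> x \<noteq> \<infinity>) \<and> (\<forall>x. \<nu> x = -\<infinity> \<longleftrightarrow> x = 0) \<and>
     (\<forall>x y. \<nu> (x * y) = \<nu> x + \<nu> y) \<and>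
     (\<forall>x y. \<nu> (x + y) \<le> max (\<nu> x) (\<nu> y))"

text \<open>Completeness with respect to the metric d(x,y) = exp(\<nu>(x - y)).\<close>
definition valuation_complete :: "('k::field \<Rightarrow> ereal) \<Rightarrow> bool" where
  "valuation_complete \<nu> \<longleftrightarrow>
     (\<forall>X :: nat \<Rightarrow> 'k.
        (\<forall>r::real. \<exists>N. \<forall>m\<ge>N. \<forall>n\<ge>N. \<nu> (X m - X n) < ereal r) \<longrightarrow>
        (\<exists>L. \<forall>r::real. \<exists>N. \<forall>n\<ge>N. \<nu> (X n - L) < ereal r))"

definition k_structure :: "('k::field \<Rightarrow> 'a::comm_ring_1) \<Rightarrow> bool" where
  "k_structure \<iota> \<longleftrightarrow> (\<forall>x y. \<iota> (x + y) = \<iota> x + \<iota> y) \<and>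
                      (\<forall>x y. \<iota> (x * y) = \<iota> x * \<iota> y) \<and> \<iota> 1 = 1"

definition k_linear :: "('k::field \<Rightarrow> 'a::comm_ring_1) \<Rightarrow> ('k \<Rightarrow> 'b::comm_ring_1) \<Rightarrow> ('a \<Rightarrow> 'b) \<Rightarrow> bool" where
  "k_linear \<iota>A \<iota>B f \<longleftrightarrow> (\<forall>x y. f (x + y) = f x + f y) \<and> (\<forall>c x. f (\<iota>A c * x) = \<iota>B c * f x)"

definition kalg_hom :: "('k::field \<Rightarrow> 'a::comm_ring_1) \<Rightarrow> ('k \<Rightarrow> 'b::comm_ring_1) \<Rightarrow> ('a \<Rightarrow> 'b) \<Rightarrow> bool" where
  "kalg_hom \<iota>A \<iota>B f \<longleftrightarrow> (\<forall>x y. f (x + y) = f x + f y) \<and> (\<forall>x y. f (x * y) = f x * f y) \<and>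
                          f 1 = 1 \<and> (\<forall>c. f (\<iota>A c) = \<iota>B c)"

inductive_set alg_gen :: "('k::field \<Rightarrow> 'a::comm_ring_1) \<Rightarrow> 'a set \<Rightarrow> 'a set"
  for \<iota> :: "'k \<Rightarrow> 'a" and S :: "'a set" where
  gen: "x \<in> S \<Longrightarrow> x \<in> alg_gen \<iota> S"
| scal: "\<iota> c \<in> alg_gen \<iota> S"
| add: "x \<in> alg_gen \<iota> S \<Longrightarrow> y \<in> alg_gen \<iota> S \<Longrightarrow> x + y \<in> alg_gen \<iota> S"
| mult: "x \<in> alg_gen \<iota> S \<Longrightarrow> y \<in> alg_gen \<iota> S \<Longrightarrow> x * y \<in> alg_gen \<iota> S"

definition finitely_generated :: "('k::field \<Rightarrow> 'a::comm_ring_1) \<Rightarrow> bool" where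
  "finitely_generated \<iota> \<longleftrightarrow> (\<exists>S. finite S \<and> alg_gen \<iota> S = UNIV)"

definition lin_indep :: "('k::field \<Rightarrow> 'a::comm_ring_1) \<Rightarrow> 'a list \<Rightarrow> bool" where
  "lin_indep \<iota> xs \<longleftrightarrow> distinct xs \<and>
     (\<forall>c :: nat \<Rightarrow> 'k. (\<Sum>i<length xs. \<iota> (c i) * xs ! i) = 0 \<longrightarrow> (\<forall>i<length xs. c i = 0))"

definition tensor_expr :: "('a \<Rightarrow> 't::comm_ring_1) \<Rightarrow> ('b \<Rightarrow> 't) \<Rightarrow> ('a \<times> 'b) list \<Rightarrow> 't" where
  "tensor_expr j1 j2 ps = sum_list (map (\<lambda>(x, y). j1 x * j2 y) ps)"

text \<open>T (with j1 a = a \<otimes> 1, j2 b = 1 \<otimes> b) is the tensor product A \<otimes>_k B of commutative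
  k-algebras: j1, j2 are k-algebra maps, T is spanned by the x \<otimes> y, and products of
  k-linearly independent families are k-linearly independent (this characterises
  A \<otimes>_k B up to unique isomorphism since k is a field).\<close>
definition tensor_prod ::
  "('k::field \<Rightarrow> 'a::comm_ring_1) \<Rightarrow> ('k \<Rightarrow> 'b::comm_ring_1) \<Rightarrow> ('k \<Rightarrow> 't::comm_ring_1)
    \<Rightarrow> ('a \<Rightarrow> 't) \<Rightarrow> ('b \<Rightarrow> 't) \<Rightarrow> bool" where
  "tensor_prod \<iota>A \<iota>B \<iota>T j1 j2 \<longleftrightarrow>
     k_structure \<iota>A \<and> k_structure \<iota>B \<and> k_structure \<iota>T \<and>
     kalg_hom \<iota>A \<iota>T j1 \<and> kalg_hom \<iota>B \<iota>T j2 \<and>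
     (\<forall>t. \<exists>ps. t = tensor_expr j1 j2 ps) \<and>
     (\<forall>xs ys. lin_indep \<iota>A xs \<longrightarrow> lin_indep \<iota>B ys \<longrightarrow>
        lin_indep \<iota>T [j1 x * j2 y. x \<leftarrow> xs, y \<leftarrow> ys])"

text \<open>Commutative Hopf algebra (A, \<Delta>, \<epsilon>, S) over k; B = A \<otimes> A via (j1, j2),
  C = (A \<otimes> A) \<otimes> A via (p, q). Axioms are stated on every expression
  \<Delta>(a) = \<Sum> x_i \<otimes> y_i.\<close>
definition hopf_algebra ::
  "('k::field \<Rightarrow> 'a::comm_ring_1) \<Rightarrow> ('k \<Rightarrow> 'b::comm_ring_1) \<Rightarrow> ('a \<Rightarrow> 'b) \<Rightarrow> ('a \<Rightarrow> 'b)
    \<Rightarrow> ('k \<Rightarrow> 'c::comm_ring_1) \<Rightarrow> ('b \<Rightarrow> 'c) \<Rightarrow> ('a \<Rightarrow> 'c)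
    \<Rightarrow> ('a \<Rightarrow> 'b) \<Rightarrow> ('a \<Rightarrow> 'k) \<Rightarrow> ('a \<Rightarrow> 'a) \<Rightarrow> bool" where
  "hopf_algebra \<iota>A \<iota>B j1 j2 \<iota>C p q \<Delta> \<epsilon> S \<longleftrightarrow>
     kalg_hom \<iota>A \<iota>B \<Delta> \<and> kalg_hom \<iota>A id \<epsilon> \<and> k_linear \<iota>A \<iota>A S \<and>
     \<comment> \<open>coassociativity: (\<Delta> \<otimes> id) \<Delta> = (id \<otimes> \<Delta>) \<Delta> in (A \<otimes> A) \<otimes> A\<close>
     (\<forall>a ps rs. \<Delta> a = tensor_expr j1 j2 ps \<longrightarrow> length rs = length ps \<longrightarrow>
        (\<forall>i<length ps. \<Delta> (snd (ps ! i)) = tensor_expr j1 j2 (rs ! i)) \<longrightarrow>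
        (\<Sum>i<length ps. p (\<Delta> (fst (ps ! i))) * q (snd (ps ! i))) =
        (\<Sum>i<length ps. tensor_expr p q (map (\<lambda>(u, v). (j1 (fst (ps ! i)) * j2 u, v)) (rs ! i)))) \<and>
     \<comment> \<open>counit\<close>
     (\<forall>a ps. \<Delta> a = tensor_expr j1 j2 ps \<longrightarrow>
        (\<Sum>(x, y)\<leftarrow>ps. \<iota>A (\<epsilon> x) * y) = a \<and> (\<Sum>(x, y)\<leftarrow>ps. x * \<iota>A (\<epsilon> y)) = a) \<and>
     \<comment> \<open>antipode\<close>
     (\<forall>a ps. \<Delta> a = tensor_expr j1 j2 ps \<longrightarrow>
        (\<Sum>(x, y)\<leftarrow>ps. S x * y) = \<iota>A (\<epsilon> a) \<and> (\<Sum>(x, y)\<leftarrow>ps. x * S y) = \<iota>A (\<epsilon> a))"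

definition Hom_k :: "('k::field \<Rightarrow> 'a::comm_ring_1) \<Rightarrow> ('k \<Rightarrow> ereal) \<Rightarrow> ('a \<Rightarrow> ereal) set" where
  "Hom_k \<iota> \<nu> = {\<phi>. hyperring_hom \<phi> \<and> (\<forall>c. \<phi> (\<iota> c) = \<nu> c)}"

definition berk_star ::
  "('k::field \<Rightarrow> 'a::comm_ring_1) \<Rightarrow> ('k \<Rightarrow> 'b::comm_ring_1) \<Rightarrow> ('k \<Rightarrow> ereal)
    \<Rightarrow> ('a \<Rightarrow> 'b) \<Rightarrow> ('a \<Rightarrow> 'b) \<Rightarrow> ('a \<Rightarrow> 'b)
    \<Rightarrow> ('a \<Rightarrow> ereal) \<Rightarrow> ('a \<Rightarrow> ereal) \<Rightarrow> ('a \<Rightarrow> ereal) set" where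
  "berk_star \<iota>A \<iota>B \<nu> j1 j2 \<Delta> g h =
     {f \<in> Hom_k \<iota>A \<nu>. \<exists>\<beta> \<in> Hom_k \<iota>B \<nu>. \<beta> \<circ> j1 = g \<and> \<beta> \<circ> j2 = h \<and> f = \<beta> \<circ> \<Delta>}"

definition cc_star ::
  "('k::field \<Rightarrow> 'a::comm_ring_1) \<Rightarrow> ('k \<Rightarrow> ereal)
    \<Rightarrow> ('a \<Rightarrow> 'b::comm_ring_1) \<Rightarrow> ('a \<Rightarrow> 'b) \<Rightarrow> ('a \<Rightarrow> 'b)
    \<Rightarrow> ('a \<Rightarrow> ereal) \<Rightarrow> ('a \<Rightarrow> ereal) \<Rightarrow> ('a \<Rightarrow> ereal) set" where
  "cc_star \<iota>A \<nu> j1 j2 \<Delta> g h =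
     {f \<in> Hom_k \<iota>A \<nu>. \<forall>a ps. \<Delta> a = tensor_expr j1 j2 ps \<longrightarrow>
        f a \<in> hsum (map (\<lambda>(x, y). g x + h y) ps)}"

end

theory Submission
  imports Defs
begin

text \<open>If \<beta> extends g and h to A \<otimes> A, multiplicativity gives \<beta>(x \<otimes> y) = g x + h y, and the
  hyperaddition axiom, iterated along any expression \<Delta>(a) = \<Sum> x_i \<otimes> y_i, puts
  \<beta>(\<Delta> a) into the corresponding iterated hypersum. None of the structure of k or A
  beyond this is needed.\<close>

lemma hyperring_hom_sum_list_in_hsum:
  assumes "hyperring_hom \<beta>"
  shows "\<beta> (sum_list xs) \<in> hsum (map \<beta> xs)"
proof (induction xs)
  case Nil
  then show ?case using assms by (simp add: hyperring_hom_def)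
next
  case (Cons x xs)
  have "\<beta> (x + sum_list xs) \<in> hadd (\<beta> x) (\<beta> (sum_list xs))"
    using assms by (simp add: hyperring_hom_def)
  with Cons.IH show ?case by auto
qed

lemma hyperring_hom_tensor_expr_in_hsum:
  assumes "hyperring_hom \<beta>"
  shows "\<beta> (tensor_expr j1 j2 ps) \<in> hsum (map (\<lambda>(x, y). \<beta> (j1 x) + \<beta> (j2 y)) ps)"
proof -
  have "map \<beta> (map (\<lambda>(x, y). j1 x * j2 y) ps) = map (\<lambda>(x, y). \<beta> (j1 x) + \<beta> (j2 y)) ps"
    using assms by (auto simp: hyperring_hom_def)
  with hyperring_hom_sum_list_in_hsum[OF assms, of "map (\<lambda>(x, y). j1 x * j2 y) ps"]
  show ?thesis
    unfolding tensor_expr_def by metis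
qed

lemma berk_star_subset_cc_star:
  "berk_star \<iota>A \<iota>B \<nu> j1 j2 \<Delta> g h \<subseteq> cc_star \<iota>A \<nu> j1 j2 \<Delta> g h"
  unfolding berk_star_def cc_star_def
  by (auto simp: Hom_k_def intro!: hyperring_hom_tensor_expr_in_hsum)

theorem proposition5p20:
  fixes \<nu> :: "'k::field \<Rightarrow> ereal"
    and \<iota>A :: "'k \<Rightarrow> 'a::comm_ring_1"
    and \<iota>B :: "'k \<Rightarrow> 'b::comm_ring_1" and j1 j2 :: "'a \<Rightarrow> 'b"
    and \<iota>C :: "'k \<Rightarrow> 'c::comm_ring_1" and p :: "'b \<Rightarrow> 'c" and q :: "'a \<Rightarrow> 'c"
    and \<Delta> :: "'a \<Rightarrow> 'b"
    and g h :: "'a \<Rightarrow> ereal"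
  assumes val: "nonarch_valuation \<nu>"
    and compl: "valuation_complete \<nu>"
    and AA: "tensor_prod \<iota>A \<iota>A \<iota>B j1 j2"
    and AAA: "tensor_prod \<iota>B \<iota>A \<iota>C p q"
    and hopf: "\<exists>\<epsilon> S. hopf_algebra \<iota>A \<iota>B j1 j2 \<iota>C p q \<Delta> \<epsilon> S"
    and fg: "finitely_generated \<iota>A"
    and g: "g \<in> Hom_k \<iota>A \<nu>" and h: "h \<in> Hom_k \<iota>A \<nu>"
  shows "berk_star \<iota>A \<iota>B \<nu> j1 j2 \<Delta> g h \<subseteq> cc_star \<iota>A \<nu> j1 j2 \<Delta> g h"
  by (rule berk_star_subset_cc_star)

end
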